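(* Let $m,d,s$ be positive integers and $q$ a prime power with $d/m<q-1$, and let $\mathcal{C}=\mathcal{C}(m,d,s,q)$ be the multiplicity code. Let $A\subseteq\mathbb{F}_q^s$ be an interpolation set for homogeneous polynomials of degree at most $m-1$. Then for every $\boldsymbol{w}_0\in\mathbb{F}_q^s$, the set of coordinates $$R=\{\boldsymbol{w}_0+\lambda\boldsymbol{v}:\ \boldsymbol{v}\in A,\ \lambda\in\mathbb{F}_q\setminus\{0\}\}$$ is a recovering set for the coordinate indexed by $\boldsymbol{w}_0$; that is, for every codeword $\boldsymbol{y}=(y_{\boldsymbol{w}})_{\boldsymbol{w}\in\mathbb{F}_q^s}\in\mathcal{C}$, the symbol $y_{\boldsymbol{w}_0}$ is a function of $(y_{\boldsymbol{w}})_{\boldsymbol{w}\in R}$.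
   Context: For $\boldsymbol{i}=(i_1,\dots,i_s)$ a vector of nonnegative integers, $wt(\boldsymbol{i})=\sum_j i_j$ and $\boldsymbol{x}^{\boldsymbol{i}}=\prod_j x_j^{i_j}$. For $P\in\mathbb{F}_q[x_1,\dots,x_s]$, the $\boldsymbol{i}$-th Hasse derivative $P^{(\boldsymbol{i})}(\boldsymbol{x})$ is the coefficient of $\boldsymbol{z}^{\boldsymbol{i}}$ in $P(\boldsymbol{x}+\boldsymbol{z})\in\mathbb{F}_q[\boldsymbol{x},\boldsymbol{z}]$. Let $\Sigma=\mathbb{F}_q^{\binom{s+m-1}{s}}$ (indexed by the $\boldsymbol{i}$ with $wt(\boldsymbol{i})<m$), and $P^{(<m)}(\boldsymbol{w})=(P^{(\boldsymbol{i})}(\boldsymbol{w}))_{wt(\boldsymbol{i})<m}\in\Sigma$. The multiplicity code $\mathcal{C}(m,d,s,q)$ is the code of length $q^s$ over $\Sigma$ with coordinates indexed by $\mathbb{F}_q^s$, consisting of the words $(P^{(<m)}(\boldsymbol{w}))_{\boldsymbol{w}\in\mathbb{F}_q^s}$ for all $P\in\mathbb{F}_q[x_1,\dots,x_s]$ with $\deg(P)\le d$ (total degree). A polynomial is homogeneous if all its monomials have the same total degree. A set $A\subseteq\mathbb{F}_q^s$ is an interpolation set for homogeneous polynomials of degree at most $m-1$ if for every $0\le j\le m-1$, any two homogeneous polynomials of degree $j$ (allowing the zero polynomial) that agree on every point of $A$ are equal. *)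

theory Defs
  imports Complex_Main
begin

text \<open>Multivariate polynomials over a finite field 'a in the variables indexed by a
finite type 'n (so s = CARD('n)) are represented by their coefficient functions
P :: ('n \<Rightarrow> nat) \<Rightarrow> 'a, mapping an exponent vector i to the coefficient of x^i.
Points of F_q^s are functions 'n \<Rightarrow> 'a.\<close>

definition wt :: "('n::finite \<Rightarrow> nat) \<Rightarrow> nat" where
  "wt i = (\<Sum>j\<in>UNIV. i j)"

text \<open>P has total degree at most d (this also makes its support finite).\<close>
definition deg_le :: "(('n::finite \<Rightarrow> nat) \<Rightarrow> 'a::zero) \<Rightarrow> nat \<Rightarrow> bool" where
  "deg_le P d \<longleftrightarrow> (\<forall>i. P i \<noteq> 0 \<longrightarrow> wt i \<le> d)"

definition homog :: "(('n::finite \<Rightarrow> nat) \<Rightarrow> 'a::zero) \<Rightarrow> nat \<Rightarrow> bool" where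
  "homog P j \<longleftrightarrow> (\<forall>i. P i \<noteq> 0 \<longrightarrow> wt i = j)"

definition eval :: "(('n::finite \<Rightarrow> nat) \<Rightarrow> 'a::comm_ring_1) \<Rightarrow> ('n \<Rightarrow> 'a) \<Rightarrow> 'a" where
  "eval P x = (\<Sum>k\<in>{k. P k \<noteq> 0}. P k * (\<Prod>j\<in>UNIV. x j ^ k j))"

text \<open>i-th Hasse derivative evaluated at x: the coefficient of z^i in P(x+z),
i.e. sum over k of P_k * prod_j binom(k_j, i_j) x_j^(k_j - i_j).\<close>
definition hasse :: "(('n::finite \<Rightarrow> nat) \<Rightarrow> 'a::comm_ring_1) \<Rightarrow> ('n \<Rightarrow> nat) \<Rightarrow> ('n \<Rightarrow> 'a) \<Rightarrow> 'a" where
  "hasse P i x = (\<Sum>k\<in>{k. P k \<noteq> 0}.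
      P k * (\<Prod>j\<in>UNIV. of_nat (k j choose i j) * x j ^ (k j - i j)))"

definition mult_word :: "nat \<Rightarrow> (('n::finite \<Rightarrow> nat) \<Rightarrow> 'a::comm_ring_1)
     \<Rightarrow> ('n \<Rightarrow> 'a) \<Rightarrow> ('n \<Rightarrow> nat) \<Rightarrow> 'a" where
  "mult_word m P = (\<lambda>w i. if wt i < m then hasse P i w else 0)"

text \<open>The multiplicity code C(m,d,s,q), s = CARD('n), q = CARD('a).\<close>
definition mult_code :: "nat \<Rightarrow> nat \<Rightarrow>
     (('n::finite \<Rightarrow> 'a::{finite,field}) \<Rightarrow> ('n \<Rightarrow> nat) \<Rightarrow> 'a) set" where
  "mult_code m d = {mult_word m P | P. deg_le P d}"

definition interp_set_homog :: "nat \<Rightarrow> ('n::finite \<Rightarrow> 'a::{finite,field}) set \<Rightarrow> bool" where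
  "interp_set_homog m A \<longleftrightarrow>
     (\<forall>j<m. \<forall>P Q :: ('n \<Rightarrow> nat) \<Rightarrow> 'a. homog P j \<longrightarrow> homog Q j \<longrightarrow>
        (\<forall>a\<in>A. eval P a = eval Q a) \<longrightarrow> P = Q)"

end

theory Submission
  imports Defs "HOL-Computational_Algebra.Polynomial" "HOL-Library.FuncSet"
begin

text \<open>Let \<open>D = P - Q\<close> be the difference of two codewords' polynomials that agree on \<open>R\<close>.
Fix \<open>v \<in> A\<close> and restrict \<open>D\<close> to the line \<open>t \<mapsto> w\<^sub>0 + t v\<close>. Taylor expansion at \<open>t = c\<close>
expresses this univariate polynomial through the Hasse derivatives of \<open>D\<close> at \<open>w\<^sub>0 + c v\<close>;
they vanish up to order \<open>m\<close>, so every \<open>c \<noteq> 0\<close> is a root of multiplicity \<open>\<ge> m\<close>.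
As the degree is \<open>\<le> d < m (q - 1)\<close>, the restriction is zero. Expanding at \<open>t = 0\<close> instead,
its coefficient of \<open>t\<^sup>e\<close> is the value at \<open>v\<close> of the homogeneous polynomial
\<open>z \<mapsto> \<Sum>\<^bsub>wt i = e\<^esub> D^(i)(w\<^sub>0) z^i\<close>. So for each \<open>e < m\<close> that polynomial vanishes on \<open>A\<close>, hence
is zero, i.e. all Hasse derivatives of \<open>D\<close> of order \<open>< m\<close> vanish at \<open>w\<^sub>0\<close>.\<close>

definition weight_le :: "nat \<Rightarrow> ('n::finite \<Rightarrow> nat) set" where
  "weight_le d = {k. wt k \<le> d}"

lemma le_wt: "k j \<le> wt k"
  unfolding wt_def by (rule member_le_sum) auto

lemma wt_mono: "(\<And>j. i j \<le> k j) \<Longrightarrow> wt i \<le> wt k"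
  unfolding wt_def by (rule sum_mono)

lemma finite_weight_le: "finite (weight_le d :: ('n::finite \<Rightarrow> nat) set)"
proof (rule finite_subset)
  show "weight_le d \<subseteq> PiE (UNIV::'n set) (\<lambda>_. {..d})"
    using le_wt by (fastforce simp: weight_le_def PiE_UNIV_domain intro: le_trans)
qed (auto intro: finite_PiE)

lemma support_subset_weight_le: "deg_le P d \<Longrightarrow> {k. P k \<noteq> 0} \<subseteq> weight_le d"
  by (auto simp: deg_le_def weight_le_def)

lemma eval_eq_sum_weight_le:
  "deg_le P d \<Longrightarrow> eval P x = (\<Sum>k\<in>weight_le d. P k * (\<Prod>j\<in>UNIV. x j ^ k j))"
  unfolding eval_def
  by (rule sum.mono_neutral_left) (auto simp: finite_weight_le dest: support_subset_weight_le)

lemma hasse_eq_sum_weight_le: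
  "deg_le P d \<Longrightarrow>
    hasse P i x = (\<Sum>k\<in>weight_le d. P k * (\<Prod>j\<in>UNIV. of_nat (k j choose i j) * x j ^ (k j - i j)))"
  unfolding hasse_def
  by (rule sum.mono_neutral_left) (auto simp: finite_weight_le dest: support_subset_weight_le)

lemma prod_binomial_eq_0:
  fixes x z :: "'n::finite \<Rightarrow> 'b::comm_ring_1"
  shows "k j < i j \<Longrightarrow> (\<Prod>j\<in>UNIV. of_nat (k j choose i j) * x j ^ (k j - i j) * z j) = 0"
  by (intro prod_zero) (auto intro!: exI[of _ j] simp: binomial_eq_0)

lemma hasse_eq_0_if_degree_less:
  assumes "deg_le P d" "d < wt i"
  shows "hasse P i x = 0"
  unfolding hasse_def
proof (rule sum.neutral, rule ballI)
  fix k assume "k \<in> {k. P k \<noteq> 0}"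
  with assms have "\<not> wt i \<le> wt k"
    by (auto simp: deg_le_def)
  then obtain j where "k j < i j"
    by (meson wt_mono not_le)
  then show "P k * (\<Prod>j\<in>UNIV. of_nat (k j choose i j) * x j ^ (k j - i j)) = 0"
    using prod_binomial_eq_0[of k j i x "\<lambda>_. 1"] by simp
qed

lemma deg_le_diff:
  fixes P Q :: "('n::finite \<Rightarrow> nat) \<Rightarrow> 'a::ab_group_add"
  shows "deg_le P d \<Longrightarrow> deg_le Q d \<Longrightarrow> deg_le (\<lambda>k. P k - Q k) d"
  by (simp add: deg_le_def) (metis diff_self)

lemma hasse_diff:
  "deg_le P d \<Longrightarrow> deg_le Q d \<Longrightarrow> hasse (\<lambda>k. P k - Q k) i x = hasse P i x - hasse Q i x"
  unfolding hasse_eq_sum_weight_le[OF deg_le_diff] hasse_eq_sum_weight_le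
  by (simp add: left_diff_distrib sum_subtractf)

subsection \<open>Taylor expansion\<close>

lemma prod_add_power_expand:
  fixes x z :: "'n::finite \<Rightarrow> 'b::comm_ring_1"
  assumes "k \<in> weight_le d"
  shows "(\<Prod>j\<in>UNIV. (x j + z j) ^ k j) =
    (\<Sum>i\<in>weight_le d.
      (\<Prod>j\<in>UNIV. of_nat (k j choose i j) * x j ^ (k j - i j)) * (\<Prod>j\<in>UNIV. z j ^ i j))"
proof -
  let ?term = "\<lambda>i. \<Prod>j\<in>UNIV. of_nat (k j choose i j) * x j ^ (k j - i j) * z j ^ i j"
  have "(\<Prod>j\<in>UNIV. (x j + z j) ^ k j) =
      (\<Prod>j\<in>UNIV. \<Sum>l\<le>k j. of_nat (k j choose l) * x j ^ (k j - l) * z j ^ l)"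
    by (intro prod.cong refl) (subst add.commute, subst binomial_ring, simp add: mult_ac)
  also have "\<dots> = (\<Sum>i\<in>PiE UNIV (\<lambda>j. {..k j}). ?term i)"
    by (rule prod_sum_PiE) auto
  also have "\<dots> = (\<Sum>i\<in>weight_le d. ?term i)"
  proof (rule sum.mono_neutral_left[OF finite_weight_le])
    show "PiE UNIV (\<lambda>j. {..k j}) \<subseteq> weight_le d"
    proof
      fix i assume "i \<in> PiE UNIV (\<lambda>j. {..k j})"
      then have "wt i \<le> wt k" by (intro wt_mono) (auto simp: PiE_UNIV_domain)
      with assms show "i \<in> weight_le d" by (simp add: weight_le_def)
    qed
    show "\<forall>i\<in>weight_le d - PiE UNIV (\<lambda>j. {..k j}). ?term i = 0"
    proof
      fix i assume "i \<in> weight_le d - PiE UNIV (\<lambda>j. {..k j})"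
      then obtain j where "k j < i j" by (auto simp: PiE_UNIV_domain) (meson not_le)
      then show "?term i = 0" by (rule prod_binomial_eq_0)
    qed
  qed
  finally show ?thesis by (simp add: prod.distrib)
qed

lemma eval_add_taylor:
  fixes P :: "('n::finite \<Rightarrow> nat) \<Rightarrow> 'b::comm_ring_1"
  assumes "deg_le P d"
  shows "eval P (\<lambda>j. x j + z j) = (\<Sum>i\<in>weight_le d. hasse P i x * (\<Prod>j\<in>UNIV. z j ^ i j))"
proof -
  have "eval P (\<lambda>j. x j + z j) = (\<Sum>k\<in>weight_le d. \<Sum>i\<in>weight_le d.
      P k * ((\<Prod>j\<in>UNIV. of_nat (k j choose i j) * x j ^ (k j - i j)) * (\<Prod>j\<in>UNIV. z j ^ i j)))"
    unfolding eval_eq_sum_weight_le[OF assms]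
    by (intro sum.cong refl) (simp add: prod_add_power_expand sum_distrib_left)
  also have "\<dots> = (\<Sum>i\<in>weight_le d. \<Sum>k\<in>weight_le d.
      P k * ((\<Prod>j\<in>UNIV. of_nat (k j choose i j) * x j ^ (k j - i j)) * (\<Prod>j\<in>UNIV. z j ^ i j)))"
    by (rule sum.swap)
  finally show ?thesis
    by (simp add: hasse_eq_sum_weight_le[OF assms] sum_distrib_right mult.assoc)
qed

subsection \<open>Restriction to a line\<close>

lemma power_to_poly: "[:c:] ^ n = [:(c::'a::comm_semiring_1) ^ n:]"
  by (induction n) (simp_all add: mult_to_poly mult.commute)

lemma deg_le_const_poly: "deg_le (\<lambda>k. [:P k:]) d \<longleftrightarrow> deg_le P d"
  by (simp add: deg_le_def)

lemma hasse_const_poly: "hasse (\<lambda>k. [:P k:]) i (\<lambda>j. [:x j:]) = [:hasse P i x:]"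
  by (simp add: hasse_def sum_to_poly prod_to_poly mult_to_poly power_to_poly of_nat_poly)
     (simp add: mult_ac)

text \<open>The univariate polynomial \<open>t \<mapsto> P(w + t v)\<close>.\<close>

definition line_poly ::
    "(('n::finite \<Rightarrow> nat) \<Rightarrow> 'a::comm_ring_1) \<Rightarrow> ('n \<Rightarrow> 'a) \<Rightarrow> ('n \<Rightarrow> 'a) \<Rightarrow> 'a poly" where
  "line_poly P w v = eval (\<lambda>k. [:P k:]) (\<lambda>j. [:w j, v j:])"

lemma degree_line_poly:
  fixes P :: "('n::finite \<Rightarrow> nat) \<Rightarrow> 'a::comm_ring_1"
  assumes "deg_le P d"
  shows "degree (line_poly P w v) \<le> d"
  unfolding line_poly_def eval_eq_sum_weight_le[OF deg_le_const_poly[THEN iffD2, OF assms]]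
proof (rule degree_sum_le[OF finite_weight_le])
  fix k :: "'n \<Rightarrow> nat" assume "k \<in> weight_le d"
  have "degree (\<Prod>j\<in>UNIV. [:w j, v j:] ^ k j) \<le> (\<Sum>j\<in>UNIV. degree ([:w j, v j:] ^ k j))"
    using degree_prod_sum_le[of UNIV "\<lambda>j. [:w j, v j:] ^ k j"] by (simp add: o_def)
  also have "\<dots> \<le> wt k"
    unfolding wt_def
  proof (rule sum_mono)
    fix j
    have "degree ([:w j, v j:] ^ k j) \<le> degree [:w j, v j:] * k j"
      by (rule degree_power_le)
    also have "\<dots> \<le> k j"
      using mult_right_mono[of "degree [:w j, v j:]" 1 "k j"] by simp
    finally show "degree ([:w j, v j:] ^ k j) \<le> k j" .
  qed
  finally show "degree ([:P k:] * (\<Prod>j\<in>UNIV. [:w j, v j:] ^ k j)) \<le> d"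
    using \<open>k \<in> weight_le d\<close> degree_smult_le[of "P k" "\<Prod>j\<in>UNIV. [:w j, v j:] ^ k j"]
    by (simp add: weight_le_def)
qed

lemma line_poly_taylor:
  assumes "deg_le P d"
  shows "line_poly P w v = (\<Sum>i\<in>weight_le d.
    [:hasse P i (\<lambda>j. w j + c * v j) * (\<Prod>j\<in>UNIV. v j ^ i j):] * [:-c, 1:] ^ wt i)"
proof -
  have line: "[:w j, v j:] = [:w j + c * v j:] + [:v j:] * [:-c, 1:]" for j
    by (simp add: algebra_simps)
  have "line_poly P w v = (\<Sum>i\<in>weight_le d.
      [:hasse P i (\<lambda>j. w j + c * v j):] * (\<Prod>j\<in>UNIV. ([:v j:] * [:-c, 1:]) ^ i j))"
    unfolding line_poly_def line eval_add_taylor[OF deg_le_const_poly[THEN iffD2, OF assms]]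
    by (simp only: hasse_const_poly)
  also have "\<dots> = (\<Sum>i\<in>weight_le d.
      [:hasse P i (\<lambda>j. w j + c * v j):] * ([:\<Prod>j\<in>UNIV. v j ^ i j:] * [:-c, 1:] ^ wt i))"
    by (simp only: power_mult_distrib prod.distrib power_sum wt_def prod_to_poly power_to_poly)
  finally show ?thesis
    by (simp only: mult.assoc[symmetric] mult_to_poly)
qed

lemma line_poly_root_multiplicity:
  fixes P :: "('n::finite \<Rightarrow> nat) \<Rightarrow> 'a::comm_ring_1"
  assumes "deg_le P d" and "\<And>i. wt i < m \<Longrightarrow> hasse P i (\<lambda>j. w j + c * v j) = 0"
  shows "[:-c, 1:] ^ m dvd line_poly P w v"
  unfolding line_poly_taylor[OF assms(1), of w v c]
proof (rule dvd_sum)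
  fix i :: "'n \<Rightarrow> nat"
  show "[:-c, 1:] ^ m dvd
      [:hasse P i (\<lambda>j. w j + c * v j) * (\<Prod>j\<in>UNIV. v j ^ i j):] * [:-c, 1:] ^ wt i"
    using assms(2)[of i] by (cases "wt i < m") (auto intro!: dvd_smult le_imp_power_dvd)
qed

text \<open>The homogeneous part of degree \<open>e\<close> of \<open>z \<mapsto> P(w + z)\<close>.\<close>

definition hasse_part ::
    "(('n::finite \<Rightarrow> nat) \<Rightarrow> 'a::comm_ring_1) \<Rightarrow> ('n \<Rightarrow> 'a) \<Rightarrow> nat \<Rightarrow> ('n \<Rightarrow> nat) \<Rightarrow> 'a" where
  "hasse_part P w e = (\<lambda>i. if wt i = e then hasse P i w else 0)"

lemma homog_hasse_part: "homog (hasse_part P w e) e"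
  by (simp add: homog_def hasse_part_def)

lemma coeff_line_poly:
  fixes P :: "('n::finite \<Rightarrow> nat) \<Rightarrow> 'a::comm_ring_1"
  assumes "deg_le P d"
  shows "coeff (line_poly P w v) e = eval (hasse_part P w e) v"
proof -
  have "deg_le (hasse_part P w e) d"
    using hasse_eq_0_if_degree_less[OF assms] by (force simp: deg_le_def hasse_part_def)
  moreover have "[:a:] * [:0, 1:] ^ n = monom a n" for a :: 'a and n
    by (simp add: monom_altdef)
  ultimately show ?thesis
    using line_poly_taylor[OF assms, of w v 0]
    by (simp add: coeff_sum eval_eq_sum_weight_le hasse_part_def, intro sum.cong) auto
qed

subsection \<open>Vanishing of the Hasse derivatives at the centre\<close>

lemma card_mult_le_degree:
  fixes p :: "'a::idom poly"
  assumes "p \<noteq> 0" "finite B" "\<And>c. c \<in> B \<Longrightarrow> [:-c, 1:] ^ m dvd p"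
  shows "m * card B \<le> degree p"
proof (cases "m = 0")
  case False
  have "m * card B = (\<Sum>c\<in>B. m)" by simp
  also have "\<dots> \<le> (\<Sum>c\<in>B. order c p)"
    using assms by (intro sum_mono) (simp add: order_divides)
  also have "\<dots> \<le> (\<Sum>c | poly p c = 0. order c p)"
  proof (rule sum_mono2[OF poly_roots_finite[OF \<open>p \<noteq> 0\<close>]])
    show "B \<subseteq> {c. poly p c = 0}"
      using assms False by (force simp: order_divides order_root)
  qed auto
  also have "\<dots> \<le> degree p" by (rule sum_order_le_degree[OF \<open>p \<noteq> 0\<close>])
  finally show ?thesis .
qed simp

lemma line_poly_eq_0:
  fixes P :: "('n::finite \<Rightarrow> nat) \<Rightarrow> 'a::{finite,field}"
  assumes "deg_le P d" "d < m * (card (UNIV :: 'a set) - 1)"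
    and "\<And>c i. c \<noteq> 0 \<Longrightarrow> wt i < m \<Longrightarrow> hasse P i (\<lambda>j. w j + c * v j) = 0"
  shows "line_poly P w v = 0"
proof (rule ccontr)
  assume "line_poly P w v \<noteq> 0"
  then have "m * card (UNIV - {0::'a}) \<le> degree (line_poly P w v)"
  proof (rule card_mult_le_degree)
    fix c :: 'a assume "c \<in> UNIV - {0}"
    with assms(3) show "[:-c, 1:] ^ m dvd line_poly P w v"
      by (intro line_poly_root_multiplicity[OF assms(1)]) auto
  qed simp
  moreover have "card (UNIV - {0::'a}) = card (UNIV :: 'a set) - 1"
    by (simp add: card_Diff_singleton)
  ultimately have "m * (card (UNIV :: 'a set) - 1) \<le> d"
    using degree_line_poly[OF assms(1), of w v] by simp
  with assms(2) show False
    by simp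
qed

lemma hasse_eq_0_at_centre:
  fixes P :: "('n::finite \<Rightarrow> nat) \<Rightarrow> 'a::{finite,field}"
  assumes "deg_le P d" "d < m * (card (UNIV :: 'a set) - 1)" "interp_set_homog m A"
    and "\<And>v c i. v \<in> A \<Longrightarrow> c \<noteq> 0 \<Longrightarrow> wt i < m \<Longrightarrow> hasse P i (\<lambda>j. w j + c * v j) = 0"
    and "wt i < m"
  shows "hasse P i w = 0"
proof -
  have "eval (hasse_part P w (wt i)) v = eval (\<lambda>_. 0) v" if "v \<in> A" for v
  proof -
    have "line_poly P w v = 0"
      by (rule line_poly_eq_0[OF assms(1,2) assms(4)[OF that]])
    then show ?thesis
      using coeff_line_poly[OF assms(1), of w v "wt i"] by (simp add: eval_def)
  qed
  moreover have "homog (\<lambda>_. 0::'a) (wt i)"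
    by (simp add: homog_def)
  ultimately have "hasse_part P w (wt i) = (\<lambda>_. 0)"
    using assms(3,5) homog_hasse_part unfolding interp_set_homog_def by blast
  then show ?thesis
    using fun_cong[of _ _ i] by (fastforce simp: hasse_part_def)
qed

lemma mult_code_recovery:
  fixes A :: "('n::finite \<Rightarrow> 'a::{finite,field}) set"
  assumes "d < m * (card (UNIV :: 'a set) - 1)" "interp_set_homog m A"
    and "y1 \<in> mult_code m d" "y2 \<in> mult_code m d"
    and "\<And>v c. v \<in> A \<Longrightarrow> c \<noteq> 0 \<Longrightarrow> y1 (\<lambda>j. w j + c * v j) = y2 (\<lambda>j. w j + c * v j)"
  shows "y1 w = y2 w"
proof -
  obtain P Q where PQ: "deg_le P d" "deg_le Q d" and y: "y1 = mult_word m P" "y2 = mult_word m Q"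
    using assms(3,4) by (auto simp: mult_code_def)
  have "hasse (\<lambda>k. P k - Q k) i w = 0" if "wt i < m" for i
  proof (rule hasse_eq_0_at_centre[OF deg_le_diff[OF PQ] assms(1,2) _ that])
    fix v and c :: 'a and i' :: "'n \<Rightarrow> nat"
    assume "v \<in> A" "c \<noteq> 0" "wt i' < m"
    with assms(5) have "y1 (\<lambda>j. w j + c * v j) i' = y2 (\<lambda>j. w j + c * v j) i'"
      by simp
    with \<open>wt i' < m\<close> show "hasse (\<lambda>k. P k - Q k) i' (\<lambda>j. w j + c * v j) = 0"
      by (simp add: hasse_diff[OF PQ] y mult_word_def)
  qed
  then show ?thesis
    by (auto simp: y mult_word_def hasse_diff[OF PQ])
qed

lemma ex_factor_through:
  assumes "\<And>y1 y2. y1 \<in> C \<Longrightarrow> y2 \<in> C \<Longrightarrow> r y1 = r y2 \<Longrightarrow> g y1 = g y2"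
  shows "\<exists>f. \<forall>y\<in>C. g y = f (r y)"
proof
  show "\<forall>y\<in>C. g y = (g \<circ> inv_into C r) (r y)"
  proof
    fix y assume "y \<in> C"
    then have "inv_into C r (r y) \<in> C" "r (inv_into C r (r y)) = r y"
      by (simp_all add: inv_into_into f_inv_into_f)
    from assms[OF \<open>y \<in> C\<close> this(1) this(2)[symmetric]] show "g y = (g \<circ> inv_into C r) (r y)"
      by simp
  qed
qed

lemma less_mult_of_divide_less:
  fixes d m q :: nat
  assumes "m > 0" "q \<ge> 1" "real d / real m < real q - 1"
  shows "d < m * (q - 1)"
proof -
  have "real d < real m * (real q - 1)"
    using assms(1,3) by (simp add: divide_less_eq mult.commute)
  also have "\<dots> = real (m * (q - 1))"
    using assms(2) by (simp add: of_nat_diff)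
  finally show ?thesis
    by linarith
qed

theorem theorem1:
  fixes m d :: nat and A :: "('n::finite \<Rightarrow> 'a::{finite,field}) set" and w0 :: "'n \<Rightarrow> 'a"
  assumes "m > 0" and "d > 0"
    and "real d / real m < real (card (UNIV :: 'a set)) - 1"
    and "interp_set_homog m A"
  defines "R \<equiv> {(\<lambda>j. w0 j + c * v j) | v c. v \<in> A \<and> c \<noteq> 0}"
  shows "\<exists>f. \<forall>y\<in>mult_code m d. y w0 = f (\<lambda>w. if w \<in> R then y w else (\<lambda>_. 0))"
proof (rule ex_factor_through)
  have d_less: "d < m * (card (UNIV :: 'a set) - 1)"
    using assms(1,3) finite_UNIV_card_ge_0[where 'a = 'a] by (intro less_mult_of_divide_less) auto
  fix y1 y2 :: "('n \<Rightarrow> 'a) \<Rightarrow> ('n \<Rightarrow> nat) \<Rightarrow> 'a"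
  assume y: "y1 \<in> mult_code m d" "y2 \<in> mult_code m d"
    and agree: "(\<lambda>w. if w \<in> R then y1 w else (\<lambda>_. 0)) = (\<lambda>w. if w \<in> R then y2 w else (\<lambda>_. 0))"
  show "y1 w0 = y2 w0"
  proof (rule mult_code_recovery[OF d_less assms(4) y])
    fix v and c :: 'a assume "v \<in> A" "c \<noteq> 0"
    then have "(\<lambda>j. w0 j + c * v j) \<in> R"
      unfolding R_def by blast
    then show "y1 (\<lambda>j. w0 j + c * v j) = y2 (\<lambda>j. w0 j + c * v j)"
      using fun_cong[OF agree, of "\<lambda>j. w0 j + c * v j"] by simp
  qed
qed

end
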